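(* Let $\tau>0$, $a>4$, and let $s,d$ be integers with $1\le s<d/2$. The estimator $\hat\sigma^2=\frac1d\sum_{k=1}^{d-s}Y^2_{(k)}$ satisfies $$\sup_{P_\xi\in\mathcal P_{a,\tau}}\sup_{\sigma>0}\sup_{\theta\in\Theta_s}\frac{\mathbf E_{\theta,P_\xi,\sigma}(\hat\sigma^2-\sigma^2)^2}{\sigma^4}\le C\max\Big(\frac1{\sqrt d},\Big(\frac sd\Big)^{1-\frac2a}\Big)^2,$$ where $C>0$ depends only on $a$ and $\tau$.
   Context: Model: $Y_i=\theta_i+\sigma\xi_i$, $i=1,\dots,d$, $\theta\in\mathbb R^d$, $\sigma>0$, $\xi_i$ i.i.d. with distribution $P_\xi$, $\mathbf E\xi_1=0,\mathbf E\xi_1^2=1$; $\mathbf E_{\theta,P_\xi,\sigma}$ expectation; $\Theta_s=\{\theta:\|\theta\|_0\le s\}$. For $\tau>0,a\ge2$, $\mathcal P_{a,\tau}$: distributions with $\mathbf E\xi_1=0,\mathbf E\xi_1^2=1$, $\mathbf P(|\xi_1|>t)\le(\tau/t)^a$ for all $t\ge2$. $Y^2_{(1)}\le\dots\le Y^2_{(d)}$ are the ordered values of $Y_1^2,\dots,Y_d^2$. *)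

theory Defs
  imports "HOL-Probability.Probability"
begin

definition noise_class :: "real \<Rightarrow> real \<Rightarrow> real measure set" where
  "noise_class a \<tau> = {P. prob_space P \<and> sets P = sets borel \<and>
      integrable P (\<lambda>x. x) \<and> (\<integral>x. x \<partial>P) = 0 \<and>
      integrable P (\<lambda>x. x\<^sup>2) \<and> (\<integral>x. x\<^sup>2 \<partial>P) = 1 \<and>
      (\<forall>t\<ge>2. measure P {x. \<bar>x\<bar> > t} \<le> (\<tau> / t) powr a)}"

definition sparse_vecs :: "nat \<Rightarrow> nat \<Rightarrow> (nat \<Rightarrow> real) set" where
  "sparse_vecs d s = {\<theta>. card {i\<in>{..<d}. \<theta> i \<noteq> 0} \<le> s}"

definition obs :: "(nat \<Rightarrow> real) \<Rightarrow> real \<Rightarrow> (nat \<Rightarrow> real) \<Rightarrow> nat \<Rightarrow> real" where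
  "obs \<theta> \<sigma> \<xi> i = \<theta> i + \<sigma> * \<xi> i"

definition sigma_hat_sq :: "nat \<Rightarrow> nat \<Rightarrow> (nat \<Rightarrow> real) \<Rightarrow> real" where
  "sigma_hat_sq d s Y =
     sum_list (take (d - s) (sort (map (\<lambda>i. (Y i)\<^sup>2) [0..<d]))) / real d"

definition noise_law :: "nat \<Rightarrow> real measure \<Rightarrow> (nat \<Rightarrow> real) measure" where
  "noise_law d P = PiM {..<d} (\<lambda>_. P)"

end

theory Submission
  imports Defs
begin

text \<open>
  Let T = d \<cdot> sigma_hat_sq be the sum of the d - s smallest Y_i^2. At least d - s coordinates
  carry pure noise, so T \<le> \<sigma>^2 \<Sum> \<xi>_i^2. Conversely, truncating every Y_i^2 at \<sigma>^2t^2 costs at most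
  s \<sigma>^2t^2 among the discarded largest values and at most \<sigma>^2t^2 at each of the s signal
  coordinates, so T \<ge> \<sigma>^2 (\<Sum> \<xi>_i^2 - \<Sum> (\<xi>_i^2 - t^2)_+ - 2 s t^2) for every t. The squared error
  is therefore controlled by W = \<Sum> (\<xi>_i^2 - 1), with second moment d (E \<xi>^4 - 1), and by
  G = \<Sum> (\<xi>_i^2 - t^2)_+, whose first two moments per coordinate are O(t^(2-a)) and O(t^(4-a))
  by summing the polynomial tail bound over dyadic shells. Choosing t = 2 (s/d)^(-1/a) makes
  s t^2/d and t^(2-a) both of order (s/d)^(1-2/a).
\<close>

lemma sum_list_take_sorted_le_sum_mset:
  fixes L :: "'a :: linordered_ab_group_add list"
  assumes "sorted L" "N \<subseteq># mset L" "k \<le> size N" "\<forall>x\<in>set L. 0 \<le> x"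
  shows "sum_list (take k L) \<le> sum_mset N"
  using assms
proof (induction L arbitrary: k N)
  case Nil
  then show ?case by simp
next
  case (Cons x L)
  have N_nonneg: "sum_mset N' \<ge> 0" if "N' \<subseteq># N" for N'
  proof -
    have "\<forall>y\<in>#N'. 0 \<le> y"
      using that Cons.prems(2,4) by (auto dest!: mset_subset_eqD)
    then show ?thesis by (induction N') auto
  qed
  show ?case
  proof (cases k)
    case 0
    then show ?thesis using N_nonneg by simp
  next
    case (Suc k')
    have IH: "sum_list (take k' L) \<le> sum_mset N'" if "N' \<subseteq># mset L" "k' \<le> size N'" for N'
      using Cons.prems(1,4) that by (intro Cons.IH) simp_all
    show ?thesis
    proof (cases "x \<in># N")
      case True
      then obtain N' where N: "N = add_mset x N'" by (rule mset_add)
      then have "sum_list (take k' L) \<le> sum_mset N'"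
        using Cons.prems(2,3) Suc by (intro IH) auto
      then show ?thesis using Suc N by simp
    next
      case False
      have NL: "N \<subseteq># mset L"
      proof (rule mset_subset_eqI)
        fix y
        show "count N y \<le> count (mset L) y"
          using mset_subset_eq_count[OF Cons.prems(2), of y] False
          by (cases "y = x") (auto simp: not_in_iff)
      qed
      have "N \<noteq> {#}" using Cons.prems(3) Suc by auto
      then obtain y N' where N: "N = add_mset y N'" by (metis multiset_cases)
      have "sum_list (take k' L) \<le> sum_mset N'"
        using NL N Cons.prems(3) Suc by (intro IH) (simp_all add: subset_mset.order_trans[OF _ NL])
      moreover have "x \<le> y"
        using Cons.prems(1) NL N by (auto dest: mset_subset_eqD)
      ultimately show ?thesis using Suc N by (simp add: add_mono)
    qed
  qed
qed

definition sq_excess :: "real \<Rightarrow> real \<Rightarrow> real" where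
  "sq_excess t x = max (x\<^sup>2 - t\<^sup>2) 0"

lemma sq_excess_nonneg: "0 \<le> sq_excess t x"
  by (simp add: sq_excess_def)

lemma borel_measurable_sq_excess [measurable]: "sq_excess t \<in> borel_measurable borel"
  unfolding sq_excess_def by measurable

lemma sq_excess_power_le:
  assumes "0 \<le> t" "n > 0"
  shows "(sq_excess t x)^n \<le> \<bar>x\<bar> powr (2 * real n) * indicator {x. \<bar>x\<bar> > t} x"
proof (cases "\<bar>x\<bar> > t")
  case True
  then have "(sq_excess t x)^n \<le> (x\<^sup>2)^n"
    using assms by (intro power_mono) (auto simp: sq_excess_def)
  also have "\<dots> = \<bar>x\<bar> ^ (2 * n)"
    by (simp add: power_mult[symmetric] power_even_abs)
  also have "\<dots> = \<bar>x\<bar> powr (2 * real n)"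
    using True assms powr_realpow[of "\<bar>x\<bar>" "2 * n"] by simp
  finally show ?thesis using True by simp
next
  case False
  then have "x\<^sup>2 \<le> t\<^sup>2" using assms power_mono[of "\<bar>x\<bar>" t 2] by simp
  then show ?thesis using False assms by (simp add: sq_excess_def zero_power)
qed

lemma sum_list_take_ge_sum_min:
  fixes L :: "'a :: linordered_idom list"
  shows "sum_list (map (\<lambda>x. min x c) L) - of_nat (length L - k) * c \<le> sum_list (take k L)"
proof -
  have "sum_list (map (\<lambda>x. min x c) xs) \<le> sum_list xs" for xs :: "'a list"
    by (induction xs) (auto intro: add_mono)
  then have "sum_list (map (\<lambda>x. min x c) (take k L)) \<le> sum_list (take k L)" .
  moreover have "sum_list (map (\<lambda>x. min x c) (drop k L)) \<le> sum_list (map (\<lambda>x. c) (drop k L))"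
    by (intro sum_list_mono) auto
  moreover have "sum_list (map (\<lambda>x. min x c) L)
      = sum_list (map (\<lambda>x. min x c) (take k L)) + sum_list (map (\<lambda>x. min x c) (drop k L))"
    by (metis append_take_drop_id map_append sum_list_append)
  ultimately show ?thesis by (simp add: sum_list_triv)
qed

lemma sum_smallest_obs_sq_le:
  assumes \<theta>: "\<theta> \<in> sparse_vecs d s"
  shows "sum_list (take (d - s) (sort (map (\<lambda>i. (obs \<theta> \<sigma> \<xi> i)\<^sup>2) [0..<d])))
    \<le> \<sigma>\<^sup>2 * (\<Sum>i<d. (\<xi> i)\<^sup>2)"
proof -
  define S where "S = {i\<in>{..<d}. \<theta> i \<noteq> 0}"
  define f where "f = (\<lambda>i. (obs \<theta> \<sigma> \<xi> i)\<^sup>2)"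
  define xs where "xs = filter (\<lambda>i. i \<notin> S) [0..<d]"
  have set_xs: "set xs = {..<d} - S" and distinct_xs: "distinct xs"
    by (auto simp: xs_def)
  have "card S \<le> s" using \<theta> by (simp add: sparse_vecs_def S_def)
  moreover have "card ({..<d} - S) = d - card S"
    by (subst card_Diff_subset) (auto simp: S_def)
  ultimately have "d - s \<le> length xs"
    using distinct_card[OF distinct_xs] by (simp add: set_xs)
  have "sum_list (take (d - s) (sort (map f [0..<d]))) \<le> sum_mset (mset (map f xs))"
  proof (rule sum_list_take_sorted_le_sum_mset)
    have "mset xs \<subseteq># mset [0..<d]" unfolding xs_def by (simp only: mset_filter multiset_filter_subset)
    then show "mset (map f xs) \<subseteq># mset (sort (map f [0..<d]))"
      by (simp add: image_mset_subseteq_mono)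
  qed (use \<open>d - s \<le> length xs\<close> in \<open>auto simp: f_def\<close>)
  also have "\<dots> = sum f ({..<d} - S)"
    by (simp only: sum_mset_sum_list sum_list_distinct_conv_sum_set[OF distinct_xs] set_xs)
  also have "\<dots> = (\<Sum>i\<in>{..<d} - S. \<sigma>\<^sup>2 * (\<xi> i)\<^sup>2)"
    by (intro sum.cong) (auto simp: f_def obs_def S_def power_mult_distrib)
  also have "\<dots> \<le> (\<Sum>i<d. \<sigma>\<^sup>2 * (\<xi> i)\<^sup>2)"
    by (intro sum_mono2) auto
  finally show ?thesis by (simp add: f_def sum_distrib_left)
qed

lemma sum_min_obs_sq_ge:
  assumes \<theta>: "\<theta> \<in> sparse_vecs d s"
  shows "\<sigma>\<^sup>2 * (\<Sum>i<d. (\<xi> i)\<^sup>2 - sq_excess t (\<xi> i)) - real s * (\<sigma>\<^sup>2 * t\<^sup>2)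
    \<le> (\<Sum>i<d. min ((obs \<theta> \<sigma> \<xi> i)\<^sup>2) (\<sigma>\<^sup>2 * t\<^sup>2))"
proof -
  define S where "S = {i\<in>{..<d}. \<theta> i \<noteq> 0}"
  define c where "c = \<sigma>\<^sup>2 * t\<^sup>2"
  have min_eq: "min (\<sigma>\<^sup>2 * (\<xi> i)\<^sup>2) c = \<sigma>\<^sup>2 * ((\<xi> i)\<^sup>2 - sq_excess t (\<xi> i))" for i
  proof -
    have "min ((\<xi> i)\<^sup>2) (t\<^sup>2) = (\<xi> i)\<^sup>2 - sq_excess t (\<xi> i)"
      by (auto simp: sq_excess_def min_def max_def)
    then show ?thesis using min_mult_distrib_left[of "\<sigma>\<^sup>2" "(\<xi> i)\<^sup>2" "t\<^sup>2"] by (simp add: c_def)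
  qed
  have term_ge: "\<sigma>\<^sup>2 * ((\<xi> i)\<^sup>2 - sq_excess t (\<xi> i)) - (if i \<in> S then c else 0)
      \<le> min ((obs \<theta> \<sigma> \<xi> i)\<^sup>2) c" if "i < d" for i
  proof (cases "i \<in> S")
    case True
    have "\<sigma>\<^sup>2 * ((\<xi> i)\<^sup>2 - sq_excess t (\<xi> i)) \<le> c"
      using min_eq[of i] by (metis min.cobounded2)
    then have "\<sigma>\<^sup>2 * ((\<xi> i)\<^sup>2 - sq_excess t (\<xi> i)) - (if i \<in> S then c else 0) \<le> 0"
      using True by simp
    moreover have "0 \<le> min ((obs \<theta> \<sigma> \<xi> i)\<^sup>2) c" by (simp add: c_def)
    ultimately show ?thesis by linarith
  next
    case False
    then show ?thesis using that min_eq[of i] by (simp add: obs_def S_def power_mult_distrib)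
  qed
  have "{..<d} \<inter> S = S" by (auto simp: S_def)
  then have "(\<Sum>i<d. \<sigma>\<^sup>2 * ((\<xi> i)\<^sup>2 - sq_excess t (\<xi> i)) - (if i \<in> S then c else 0))
      = \<sigma>\<^sup>2 * (\<Sum>i<d. (\<xi> i)\<^sup>2 - sq_excess t (\<xi> i)) - real (card S) * c"
    by (simp add: sum.If_cases sum_subtractf sum_distrib_left right_diff_distrib)
  moreover have "real (card S) * c \<le> real s * c"
    using \<theta> by (intro mult_right_mono) (simp_all add: sparse_vecs_def S_def c_def)
  moreover have "(\<Sum>i<d. \<sigma>\<^sup>2 * ((\<xi> i)\<^sup>2 - sq_excess t (\<xi> i)) - (if i \<in> S then c else 0))
      \<le> (\<Sum>i<d. min ((obs \<theta> \<sigma> \<xi> i)\<^sup>2) c)"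
    using term_ge by (intro sum_mono) simp
  ultimately show ?thesis by (simp add: c_def)
qed

lemma sum_smallest_obs_sq_ge:
  assumes \<theta>: "\<theta> \<in> sparse_vecs d s" and "s \<le> d"
  shows "\<sigma>\<^sup>2 * (\<Sum>i<d. (\<xi> i)\<^sup>2 - sq_excess t (\<xi> i)) - 2 * real s * (\<sigma>\<^sup>2 * t\<^sup>2)
    \<le> sum_list (take (d - s) (sort (map (\<lambda>i. (obs \<theta> \<sigma> \<xi> i)\<^sup>2) [0..<d])))"
proof -
  define f where "f = (\<lambda>i. (obs \<theta> \<sigma> \<xi> i)\<^sup>2)"
  define c where "c = \<sigma>\<^sup>2 * t\<^sup>2"
  have "\<sigma>\<^sup>2 * (\<Sum>i<d. (\<xi> i)\<^sup>2 - sq_excess t (\<xi> i)) - real s * c \<le> (\<Sum>i<d. min (f i) c)"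
    using sum_min_obs_sq_ge[OF \<theta>] by (simp add: f_def c_def)
  also have "\<dots> = sum_list (map (\<lambda>x. min x c) (map f [0..<d]))"
    by (simp add: sum_set_upt_conv_sum_list_nat[symmetric] atLeast0LessThan)
  also have "\<dots> = sum_list (map (\<lambda>x. min x c) (sort (map f [0..<d])))"
    by (metis mset_map mset_sort sum_mset_sum_list)
  also have "\<dots> - real s * c \<le> sum_list (take (d - s) (sort (map f [0..<d])))"
    using sum_list_take_ge_sum_min[of c "sort (map f [0..<d])" "d - s"] \<open>s \<le> d\<close> by simp
  finally show ?thesis by (simp add: c_def f_def)
qed

lemma sigma_hat_sq_error_sq_le:
  assumes \<theta>: "\<theta> \<in> sparse_vecs d s" and "s < d"
  shows "(sigma_hat_sq d s (obs \<theta> \<sigma> \<xi>) - \<sigma>\<^sup>2)\<^sup>2 \<le> \<sigma>^4 * (2 * (\<Sum>i<d. (\<xi> i)\<^sup>2 - 1)\<^sup>2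
      + 4 * (\<Sum>i<d. sq_excess t (\<xi> i))\<^sup>2 + 4 * (2 * real s * t\<^sup>2)\<^sup>2) / (real d)\<^sup>2"
proof -
  define T where "T = sum_list (take (d - s) (sort (map (\<lambda>i. (obs \<theta> \<sigma> \<xi> i)\<^sup>2) [0..<d])))"
  define W where "W = (\<Sum>i<d. (\<xi> i)\<^sup>2 - 1)"
  define G where "G = (\<Sum>i<d. sq_excess t (\<xi> i))"
  define b where "b = 2 * real s * t\<^sup>2"
  have "G \<ge> 0" by (simp add: G_def sq_excess_nonneg sum_nonneg)
  have "b \<ge> 0" by (simp add: b_def)
  have sum_sq: "(\<Sum>i<d. (\<xi> i)\<^sup>2) = W + real d" by (simp add: W_def sum_subtractf)
  have "T \<le> \<sigma>\<^sup>2 * (W + real d)"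
    using sum_smallest_obs_sq_le[OF \<theta>, of \<sigma> \<xi>] by (simp add: T_def sum_sq)
  moreover have "\<sigma>\<^sup>2 * (W + real d - G - b) \<le> T"
    using sum_smallest_obs_sq_ge[OF \<theta>, of \<sigma> \<xi> t] \<open>s < d\<close>
    by (simp add: T_def G_def b_def sum_subtractf sum_sq algebra_simps)
  moreover have "\<sigma>\<^sup>2 * W \<le> \<sigma>\<^sup>2 * \<bar>W\<bar>" "\<sigma>\<^sup>2 * (- W) \<le> \<sigma>\<^sup>2 * \<bar>W\<bar>"
    "0 \<le> \<sigma>\<^sup>2 * G" "0 \<le> \<sigma>\<^sup>2 * b"
    using \<open>G \<ge> 0\<close> \<open>b \<ge> 0\<close> by (intro mult_left_mono mult_nonneg_nonneg; simp)+
  ultimately have "\<bar>T - real d * \<sigma>\<^sup>2\<bar> \<le> \<sigma>\<^sup>2 * (\<bar>W\<bar> + G + b)"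
    by (simp add: abs_le_iff algebra_simps)
  then have "(T - real d * \<sigma>\<^sup>2)\<^sup>2 \<le> (\<sigma>\<^sup>2 * (\<bar>W\<bar> + G + b))\<^sup>2"
    by (metis abs_ge_zero power2_abs power_mono)
  also have "\<dots> \<le> \<sigma>^4 * (2 * W\<^sup>2 + 4 * G\<^sup>2 + 4 * b\<^sup>2)"
  proof -
    have "(\<bar>W\<bar> + G + b)\<^sup>2 \<le> 2 * W\<^sup>2 + 4 * G\<^sup>2 + 4 * b\<^sup>2"
      using zero_le_power2[of "\<bar>W\<bar> - G - b"] zero_le_power2[of "G - b"]
      by (simp add: power2_eq_square algebra_simps)
    then show ?thesis by (simp add: power_mult_distrib mult_left_mono)
  qed
  finally show ?thesis
    using \<open>s < d\<close> by (simp add: sigma_hat_sq_def T_def W_def G_def b_def field_simps)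
qed

lemma integral_PiM_coord_products:
  fixes h :: "'a \<Rightarrow> real"
  assumes P: "prob_space P" and h: "integrable P h" "integrable P (\<lambda>x. (h x)\<^sup>2)"
    and ij: "i \<in> I" "j \<in> I" "finite I"
  shows "integrable (PiM I (\<lambda>_. P)) (\<lambda>x. h (x i) * h (x j))"
    "(\<integral>x. h (x i) * h (x j) \<partial>PiM I (\<lambda>_. P)) = (if i = j then (\<integral>x. (h x)\<^sup>2 \<partial>P) else (\<integral>x. h x \<partial>P)\<^sup>2)"
proof -
  interpret P: prob_space P by fact
  interpret product_sigma_finite "\<lambda>_. P" by unfold_locales
  obtain f where prod_f: "\<And>x. (\<Prod>k\<in>I. f k (x k)) = h (x i) * h (x j)"
    and int_f: "\<And>k. integrable P (f k)"
    and prod_int_f: "(\<Prod>k\<in>I. integral\<^sup>L P (f k))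
      = (if i = j then (\<integral>x. (h x)\<^sup>2 \<partial>P) else (\<integral>x. h x \<partial>P)\<^sup>2)"
  proof (cases "i = j")
    case True
    define f where "f k = (if k = j then (\<lambda>x. (h x)\<^sup>2) else (\<lambda>_. 1))" for k
    have "integral\<^sup>L P (f k) = (if k = j then (\<integral>x. (h x)\<^sup>2 \<partial>P) else 1)" for k
      by (simp add: f_def P.prob_space)
    moreover have "f k y = (if k = j then (h y)\<^sup>2 else 1)" for k y
      by (simp add: f_def)
    moreover have "integrable P (f k)" for k
      using h by (cases "k = j") (simp_all add: f_def)
    ultimately show ?thesis
      by (intro that[of f]) (use True ij h in \<open>auto simp: prod.delta power2_eq_square\<close>)
  next
    case False
    have pair: "I \<inter> {k. k = i \<or> k = j} = {i, j}" using ij by auto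
    define f where "f k = (if k = i \<or> k = j then h else (\<lambda>_. 1))" for k
    have "integral\<^sup>L P (f k) = (if k = i \<or> k = j then (\<integral>x. h x \<partial>P) else 1)" for k
      by (simp add: f_def P.prob_space)
    moreover have "f k y = (if k = i \<or> k = j then h y else 1)" for k y
      by (simp add: f_def)
    moreover have "integrable P (f k)" for k
      using h by (simp add: f_def)
    ultimately show ?thesis
      by (intro that[of f]) (use False ij h pair in \<open>auto simp: prod.If_cases power2_eq_square\<close>)
  qed
  show "integrable (PiM I (\<lambda>_. P)) (\<lambda>x. h (x i) * h (x j))"
    using product_integrable_prod[of I f] int_f ij by (simp add: prod_f)
  show "(\<integral>x. h (x i) * h (x j) \<partial>PiM I (\<lambda>_. P)) = (if i = j then (\<integral>x. (h x)\<^sup>2 \<partial>P) else (\<integral>x. h x \<partial>P)\<^sup>2)"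
    using product_integral_prod[of I f] int_f ij prod_int_f by (simp add: prod_f)
qed

lemma sum_sum_if_eq:
  fixes A B :: "'a :: comm_ring_1"
  shows "(\<Sum>i<d. \<Sum>j<d. if i = j then A else B) = of_nat d * A + (of_nat d ^ 2 - of_nat d) * B"
proof -
  have "(\<Sum>j<d. if i = j then A else B) = A + (of_nat d - 1) * B" if "i < d" for i
  proof -
    have "(\<Sum>j<d. if i = j then A else B) = (\<Sum>j<d. (if i = j then A - B else 0) + B)"
      by (intro sum.cong) auto
    then show ?thesis using that by (simp add: sum.distrib algebra_simps)
  qed
  then have "(\<Sum>i<d. \<Sum>j<d. if i = j then A else B) = (\<Sum>i<d. A + (of_nat d - 1) * B)"
    by (intro sum.cong) auto
  then show ?thesis by (simp add: power2_eq_square algebra_simps)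
qed

lemma nn_integral_PiM_sum_square:
  fixes h :: "'a \<Rightarrow> real"
  assumes P: "prob_space P" and h: "integrable P h" "integrable P (\<lambda>x. (h x)\<^sup>2)"
  shows "(\<integral>\<^sup>+x. ennreal ((\<Sum>i<d. h (x i))\<^sup>2) \<partial>PiM {..<d} (\<lambda>_. P))
     = ennreal (real d * (\<integral>x. (h x)\<^sup>2 \<partial>P) + (real d ^ 2 - real d) * (\<integral>x. h x \<partial>P)\<^sup>2)"
proof -
  let ?M = "PiM {..<d} (\<lambda>_. P)"
  note coord = integral_PiM_coord_products[OF P h, of _ "{..<d}"]
  have square: "(\<Sum>i<d. h (x i))\<^sup>2 = (\<Sum>i<d. \<Sum>j<d. h (x i) * h (x j))" for x
    by (simp add: power2_eq_square sum_product)
  have int_square: "integrable ?M (\<lambda>x. (\<Sum>i<d. h (x i))\<^sup>2)"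
    unfolding square by (auto intro!: integrable_sum coord(1))
  have "(\<integral>x. (\<Sum>i<d. h (x i))\<^sup>2 \<partial>?M) = (\<Sum>i<d. \<Sum>j<d. \<integral>x. h (x i) * h (x j) \<partial>?M)"
    unfolding square using coord(1)
    by (subst Bochner_Integration.integral_sum)
      (auto intro!: integrable_sum sum.cong Bochner_Integration.integral_sum)
  also have "\<dots> = (\<Sum>i<d. \<Sum>j<d. if i = j then (\<integral>x. (h x)\<^sup>2 \<partial>P) else (\<integral>x. h x \<partial>P)\<^sup>2)"
    by (intro sum.cong refl) (simp add: coord)
  also have "\<dots> = real d * (\<integral>x. (h x)\<^sup>2 \<partial>P) + (real d ^ 2 - real d) * (\<integral>x. h x \<partial>P)\<^sup>2"
    by (rule sum_sum_if_eq)
  finally show ?thesis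
    using int_square by (simp add: nn_integral_eq_integral)
qed

lemma abs_powr_indicator_le_dyadic_sum:
  fixes x t p :: real
  assumes t: "t > 0" and p: "p \<ge> 0"
  shows "ennreal (\<bar>x\<bar> powr p * indicator {x. \<bar>x\<bar> > t} x)
     \<le> (\<Sum>k. ennreal ((2^(k+1) * t) powr p) * indicator {x. \<bar>x\<bar> > 2^k * t} x)"
proof (cases "\<bar>x\<bar> > t")
  case False
  then show ?thesis by simp
next
  case True
  obtain n where "\<bar>x\<bar> / t < 2^n" using real_arch_pow[of 2 "\<bar>x\<bar> / t"] by auto
  then have ex: "\<exists>m. \<bar>x\<bar> \<le> 2^(m+1) * t"
    using t by (intro exI[of _ n]) (simp add: field_simps)
  define K where "K = (LEAST m. \<bar>x\<bar> \<le> 2^(m+1) * t)"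
  have upper: "\<bar>x\<bar> \<le> 2^(K+1) * t" unfolding K_def by (rule LeastI_ex[OF ex])
  have lower: "\<bar>x\<bar> > 2^K * t"
  proof (cases K)
    case 0
    then show ?thesis using True by simp
  next
    case (Suc m)
    then have "\<not> \<bar>x\<bar> \<le> 2^(m+1) * t" unfolding K_def by (intro not_less_Least) simp
    then show ?thesis using Suc by simp
  qed
  have "ennreal (\<bar>x\<bar> powr p * indicator {x. \<bar>x\<bar> > t} x) \<le> ennreal ((2^(K+1) * t) powr p)"
    using True upper p t by (intro ennreal_leI) (simp add: powr_mono2)
  also have "\<dots> = (\<Sum>k\<in>{K}. ennreal ((2^(k+1) * t) powr p) * indicator {x. \<bar>x\<bar> > 2^k * t} x)"
    using lower by simp
  also have "\<dots> \<le> (\<Sum>k. ennreal ((2^(k+1) * t) powr p) * indicator {x. \<bar>x\<bar> > 2^k * t} x)"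
    by (intro sum_le_suminf) auto
  finally show ?thesis .
qed

definition tail_moment_const :: "real \<Rightarrow> real \<Rightarrow> real \<Rightarrow> real" where
  "tail_moment_const a \<tau> p = 2 powr p * \<tau> powr a / (1 - 2 powr (p - a))"

lemma tail_moment_const_nonneg: "p < a \<Longrightarrow> 0 \<le> tail_moment_const a \<tau> p"
  using powr_less_one[of 2 "p - a"] by (simp add: tail_moment_const_def)

lemma nn_integral_abs_powr_tail_le:
  fixes P :: "real measure"
  assumes P: "prob_space P" "sets P = sets borel"
    and tail: "\<And>t. t \<ge> t\<^sub>0 \<Longrightarrow> measure P {x. \<bar>x\<bar> > t} \<le> (\<tau> / t) powr a"
    and \<tau>: "\<tau> > 0" and p: "0 \<le> p" "p < a" and t: "t\<^sub>0 > 0" "t \<ge> t\<^sub>0"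
  shows "(\<integral>\<^sup>+x. ennreal (\<bar>x\<bar> powr p * indicator {x. \<bar>x\<bar> > t} x) \<partial>P)
     \<le> ennreal (tail_moment_const a \<tau> p * t powr (p - a))"
proof -
  interpret prob_space P by (rule P(1))
  define c where "c = 2 powr p * \<tau> powr a * t powr (p - a)"
  define r where "r = (2::real) powr (p - a)"
  have r: "0 < r" "r < 1" using p by (auto simp: r_def intro!: powr_less_one)
  have term_le: "ennreal ((2^(k+1) * t) powr p) * emeasure P {x. \<bar>x\<bar> > 2^k * t} \<le> ennreal (c * r^k)"
    for k :: nat
  proof -
    have "t\<^sub>0 \<le> 2^k * t"
      using t mult_right_mono[of 1 "2^k" t] one_le_power[of "2::real" k] by linarith
    then have "emeasure P {x. \<bar>x\<bar> > 2^k * t} \<le> ennreal ((\<tau> / (2^k * t)) powr a)"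
      using tail[of "2^k * t"] t by (simp add: emeasure_eq_measure ennreal_leI)
    then have "ennreal ((2^(k+1) * t) powr p) * emeasure P {x. \<bar>x\<bar> > 2^k * t}
        \<le> ennreal ((2^(k+1) * t) powr p * (\<tau> / (2^k * t)) powr a)"
      by (simp add: ennreal_mult mult_left_mono)
    also have "(2^(k+1) * t) powr p * (\<tau> / (2^k * t)) powr a = c * r^k"
      using t \<tau> by (simp add: c_def r_def powr_mult powr_divide powr_diff powr_add
          powr_realpow[symmetric] powr_powr powr_power[symmetric] algebra_simps field_simps)
    finally show ?thesis .
  qed
  have "(\<integral>\<^sup>+x. ennreal (\<bar>x\<bar> powr p * indicator {x. \<bar>x\<bar> > t} x) \<partial>P)
      \<le> (\<integral>\<^sup>+x. (\<Sum>k. ennreal ((2^(k+1) * t) powr p) * indicator {x. \<bar>x\<bar> > 2^k * t} x) \<partial>P)"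
    using p t by (intro nn_integral_mono abs_powr_indicator_le_dyadic_sum) auto
  also have "\<dots> = (\<Sum>k. ennreal ((2^(k+1) * t) powr p) * emeasure P {x. \<bar>x\<bar> > 2^k * t})"
    using P(2) by (simp add: nn_integral_suminf nn_integral_cmult_indicator)
  also have "\<dots> \<le> (\<Sum>k. ennreal (c * r^k))"
    by (intro suminf_le term_le summableI)
  also have "\<dots> = ennreal (c / (1 - r))"
    using r by (simp add: suminf_ennreal2 suminf_mult suminf_geometric c_def)
  finally show ?thesis
    by (simp add: c_def r_def tail_moment_const_def)
qed

lemma noise_classD:
  assumes "P \<in> noise_class a \<tau>"
  shows "prob_space P" "sets P = sets borel"
    "integrable P (\<lambda>x. x\<^sup>2)" "(\<integral>x. x\<^sup>2 \<partial>P) = 1"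
    "\<And>t. t \<ge> 2 \<Longrightarrow> measure P {x. \<bar>x\<bar> > t} \<le> (\<tau> / t) powr a"
  using assms by (auto simp: noise_class_def)

lemma nn_integral_le_imp_integrable:
  fixes f :: "'a \<Rightarrow> real"
  assumes "f \<in> borel_measurable M" "\<And>x. 0 \<le> f x" "(\<integral>\<^sup>+x. ennreal (f x) \<partial>M) \<le> ennreal B" "0 \<le> B"
  shows "integrable M f" "integral\<^sup>L M f \<le> B"
proof -
  show int: "integrable M f"
    using assms by (intro integrableI_nonneg) (auto simp: le_less_trans)
  show "integral\<^sup>L M f \<le> B"
    using nn_integral_eq_integral[OF int] assms by (simp add: ennreal_le_iff)
qed

lemma noise_fourth_moment:
  assumes P: "P \<in> noise_class a \<tau>" and "\<tau> > 0" "a > 4"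
  shows "integrable P (\<lambda>x. x^4)"
    "(\<integral>x. x^4 \<partial>P) \<le> 16 + tail_moment_const a \<tau> 4 * 2 powr (4 - a)"
proof -
  note D = noise_classD[OF P]
  interpret prob_space P by (rule D(1))
  have "ennreal (x^4) \<le> 16 + ennreal (\<bar>x\<bar> powr 4 * indicator {x. \<bar>x\<bar> > 2} x)" for x :: real
  proof (cases "\<bar>x\<bar> > 2")
    case True
    then show ?thesis by (simp add: powr_realpow)
  next
    case False
    then have "\<bar>x\<bar>^4 \<le> 2^4" by (intro power_mono) auto
    then have "ennreal (x^4) \<le> ennreal 16" by (intro ennreal_leI) simp
    then show ?thesis using False by simp
  qed
  then have "(\<integral>\<^sup>+x. ennreal (x^4) \<partial>P)
      \<le> (\<integral>\<^sup>+x. 16 + ennreal (\<bar>x\<bar> powr 4 * indicator {x. \<bar>x\<bar> > 2} x) \<partial>P)"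
    by (intro nn_integral_mono)
  also have "\<dots> = 16 + (\<integral>\<^sup>+x. ennreal (\<bar>x\<bar> powr 4 * indicator {x. \<bar>x\<bar> > 2} x) \<partial>P)"
    using D(2) by (subst nn_integral_add) (auto simp: emeasure_space_1)
  also have "\<dots> \<le> 16 + ennreal (tail_moment_const a \<tau> 4 * 2 powr (4 - a))"
    by (rule add_left_mono, rule nn_integral_abs_powr_tail_le[where t\<^sub>0 = 2, OF D(1,2) D(5)])
      (use assms in auto)
  also have "\<dots> = ennreal (16 + tail_moment_const a \<tau> 4 * 2 powr (4 - a))"
    using tail_moment_const_nonneg[of 4 a \<tau>] \<open>a > 4\<close> by (simp add: ennreal_plus)
  finally have bound: "(\<integral>\<^sup>+x. ennreal (x^4) \<partial>P) \<le> ennreal (16 + tail_moment_const a \<tau> 4 * 2 powr (4 - a))" .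
  have meas: "(\<lambda>x. x^4) \<in> borel_measurable P"
    unfolding measurable_cong_sets[OF D(2) refl] by measurable
  have nonneg: "0 \<le> 16 + tail_moment_const a \<tau> 4 * 2 powr (4 - a)"
    using \<open>a > 4\<close> by (intro add_nonneg_nonneg mult_nonneg_nonneg tail_moment_const_nonneg) auto
  show "integrable P (\<lambda>x. x^4)" "(\<integral>x. x^4 \<partial>P) \<le> 16 + tail_moment_const a \<tau> 4 * 2 powr (4 - a)"
    by (rule nn_integral_le_imp_integrable[OF meas _ bound nonneg], simp)+
qed

lemma noise_sq_excess_moment:
  assumes P: "P \<in> noise_class a \<tau>" and "\<tau> > 0" "2 * real n < a" "n > 0" "t \<ge> 2"
  shows "integrable P (\<lambda>x. (sq_excess t x)^n)"
    "(\<integral>x. (sq_excess t x)^n \<partial>P) \<le> tail_moment_const a \<tau> (2 * real n) * t powr (2 * real n - a)"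
proof -
  note D = noise_classD[OF P]
  have "(\<integral>\<^sup>+x. ennreal ((sq_excess t x)^n) \<partial>P)
      \<le> (\<integral>\<^sup>+x. ennreal (\<bar>x\<bar> powr (2 * real n) * indicator {x. \<bar>x\<bar> > t} x) \<partial>P)"
    using assms by (intro nn_integral_mono ennreal_leI sq_excess_power_le) auto
  also have "\<dots> \<le> ennreal (tail_moment_const a \<tau> (2 * real n) * t powr (2 * real n - a))"
    by (rule nn_integral_abs_powr_tail_le[where t\<^sub>0 = 2, OF D(1,2) D(5)]) (use assms in auto)
  finally have bound: "(\<integral>\<^sup>+x. ennreal ((sq_excess t x)^n) \<partial>P)
      \<le> ennreal (tail_moment_const a \<tau> (2 * real n) * t powr (2 * real n - a))" .
  have meas: "(\<lambda>x. (sq_excess t x)^n) \<in> borel_measurable P"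
    unfolding measurable_cong_sets[OF D(2) refl] by measurable
  have nonneg: "0 \<le> tail_moment_const a \<tau> (2 * real n) * t powr (2 * real n - a)"
    using \<open>2 * real n < a\<close> by (intro mult_nonneg_nonneg tail_moment_const_nonneg) auto
  show "integrable P (\<lambda>x. (sq_excess t x)^n)"
    "(\<integral>x. (sq_excess t x)^n \<partial>P) \<le> tail_moment_const a \<tau> (2 * real n) * t powr (2 * real n - a)"
    by (rule nn_integral_le_imp_integrable[OF meas _ bound nonneg], simp add: sq_excess_nonneg)+
qed

lemma noise_law_prob_space:
  "P \<in> noise_class a \<tau> \<Longrightarrow> prob_space (noise_law d P)"
  unfolding noise_law_def by (intro prob_space_PiM noise_classD(1))

lemma measurable_noise_law:
  assumes "P \<in> noise_class a \<tau>"
  shows "measurable (noise_law d P) N = measurable (PiM {..<d} (\<lambda>_. borel)) N"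
  using noise_classD(2)[OF assms] unfolding noise_law_def
  by (intro measurable_cong_sets sets_PiM_cong) simp_all

lemma nn_integral_noise_sum_sq_minus_one:
  assumes P: "P \<in> noise_class a \<tau>" and "\<tau> > 0" "a > 4"
  shows "(\<integral>\<^sup>+x. ennreal ((\<Sum>i<d. (x i)\<^sup>2 - 1)\<^sup>2) \<partial>noise_law d P)
    \<le> ennreal (real d * (16 + tail_moment_const a \<tau> 4 * 2 powr (4 - a)))"
proof -
  note D = noise_classD[OF P]
  interpret prob_space P by (rule D(1))
  note m4 = noise_fourth_moment[OF assms]
  have square: "(x\<^sup>2 - 1)\<^sup>2 = x^4 - 2 * x\<^sup>2 + 1" for x :: real
    by (simp add: power2_diff power_mult[symmetric])
  have "integrable P (\<lambda>x. (x\<^sup>2 - 1)\<^sup>2)"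
    unfolding square using m4(1) D(3) by simp
  moreover have "(\<integral>x. (x\<^sup>2 - 1)\<^sup>2 \<partial>P) = (\<integral>x. x^4 \<partial>P) - 1"
    unfolding square using m4(1) D(3,4) by (simp add: prob_space)
  moreover have "(\<integral>x. x\<^sup>2 - 1 \<partial>P) = 0"
    using D(3,4) by (simp add: prob_space)
  ultimately have "(\<integral>\<^sup>+x. ennreal ((\<Sum>i<d. (x i)\<^sup>2 - 1)\<^sup>2) \<partial>noise_law d P)
      = ennreal (real d * ((\<integral>x. x^4 \<partial>P) - 1))"
    unfolding noise_law_def using D(3)
    by (subst nn_integral_PiM_sum_square) (simp_all add: D(1))
  also have "\<dots> \<le> ennreal (real d * (16 + tail_moment_const a \<tau> 4 * 2 powr (4 - a)))"
    using m4(2) by (intro ennreal_leI mult_left_mono) auto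
  finally show ?thesis .
qed

lemma nn_integral_noise_sum_sq_excess:
  assumes P: "P \<in> noise_class a \<tau>" and "\<tau> > 0" "a > 4" "t \<ge> 2"
  shows "(\<integral>\<^sup>+x. ennreal ((\<Sum>i<d. sq_excess t (x i))\<^sup>2) \<partial>noise_law d P)
    \<le> ennreal (real d * (tail_moment_const a \<tau> 4 * t powr (4 - a))
        + (real d)\<^sup>2 * (tail_moment_const a \<tau> 2 * t powr (2 - a))\<^sup>2)"
proof -
  note D = noise_classD[OF P]
  note m1 = noise_sq_excess_moment[OF P \<open>\<tau> > 0\<close>, of 1 t, simplified]
  note m2 = noise_sq_excess_moment[OF P \<open>\<tau> > 0\<close>, of 2 t, simplified]
  have "(\<integral>\<^sup>+x. ennreal ((\<Sum>i<d. sq_excess t (x i))\<^sup>2) \<partial>noise_law d P)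
      = ennreal (real d * (\<integral>x. (sq_excess t x)\<^sup>2 \<partial>P) + ((real d)\<^sup>2 - real d) * (\<integral>x. sq_excess t x \<partial>P)\<^sup>2)"
    unfolding noise_law_def using m1 m2 assms
    by (subst nn_integral_PiM_sum_square) (simp_all add: D(1))
  also have "\<dots> \<le> ennreal (real d * (tail_moment_const a \<tau> 4 * t powr (4 - a))
        + (real d)\<^sup>2 * (tail_moment_const a \<tau> 2 * t powr (2 - a))\<^sup>2)"
  proof (intro ennreal_leI add_mono mult_left_mono mult_mono power_mono)
    show "(\<integral>x. (sq_excess t x)\<^sup>2 \<partial>P) \<le> tail_moment_const a \<tau> 4 * t powr (4 - a)"
      using m2 assms by simp
    show "(\<integral>x. sq_excess t x \<partial>P) \<le> tail_moment_const a \<tau> 2 * t powr (2 - a)"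
      using m1 assms by simp
  qed (auto simp: sq_excess_nonneg)
  finally show ?thesis .
qed

lemma sigma_hat_sq_risk_le:
  assumes P: "P \<in> noise_class a \<tau>" and "\<tau> > 0" "a > 4"
    and \<theta>: "\<theta> \<in> sparse_vecs d s" and "s < d" and "t \<ge> 2"
  defines "V\<^sub>W \<equiv> real d * (16 + tail_moment_const a \<tau> 4 * 2 powr (4 - a))"
    and "V\<^sub>G \<equiv> real d * (tail_moment_const a \<tau> 4 * t powr (4 - a))
        + (real d)\<^sup>2 * (tail_moment_const a \<tau> 2 * t powr (2 - a))\<^sup>2"
  shows "(\<integral>\<^sup>+\<xi>. ennreal ((sigma_hat_sq d s (obs \<theta> \<sigma> \<xi>) - \<sigma>\<^sup>2)\<^sup>2) \<partial>noise_law d P)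
    \<le> ennreal (\<sigma>^4 / (real d)\<^sup>2 * (2 * V\<^sub>W + 4 * V\<^sub>G + 4 * (2 * real s * t\<^sup>2)\<^sup>2))"
proof -
  interpret M: prob_space "noise_law d P" by (rule noise_law_prob_space[OF P])
  define W where "W \<xi> = ennreal ((\<Sum>i<d. (\<xi> i)\<^sup>2 - 1)\<^sup>2)" for \<xi> :: "nat \<Rightarrow> real"
  define G where "G \<xi> = ennreal ((\<Sum>i<d. sq_excess t (\<xi> i))\<^sup>2)" for \<xi> :: "nat \<Rightarrow> real"
  define c where "c = \<sigma>^4 / (real d)\<^sup>2"
  define b where "b = (2 * real s * t\<^sup>2)\<^sup>2"
  have "V\<^sub>W \<ge> 0" "V\<^sub>G \<ge> 0" "b \<ge> 0" "c \<ge> 0"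
    using tail_moment_const_nonneg[of 4 a \<tau>] \<open>a > 4\<close>
    by (simp_all add: V\<^sub>W_def V\<^sub>G_def b_def c_def)
  have combine: "ennreal c * (2 * ennreal x + 4 * ennreal y + 4 * ennreal b)
      = ennreal (c * (2 * x + 4 * y + 4 * b))" if "x \<ge> 0" "y \<ge> 0" for x y
    using that \<open>b \<ge> 0\<close> \<open>c \<ge> 0\<close> by (simp add: ennreal_mult ennreal_plus)
  have meas: "W \<in> borel_measurable (noise_law d P)" "G \<in> borel_measurable (noise_law d P)"
    unfolding W_def G_def measurable_noise_law[OF P] by measurable
  have pointwise: "ennreal ((sigma_hat_sq d s (obs \<theta> \<sigma> \<xi>) - \<sigma>\<^sup>2)\<^sup>2)
      \<le> ennreal c * (2 * W \<xi> + 4 * G \<xi> + 4 * ennreal b)" for \<xi>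
  proof -
    have "(sigma_hat_sq d s (obs \<theta> \<sigma> \<xi>) - \<sigma>\<^sup>2)\<^sup>2
        \<le> c * (2 * (\<Sum>i<d. (\<xi> i)\<^sup>2 - 1)\<^sup>2 + 4 * (\<Sum>i<d. sq_excess t (\<xi> i))\<^sup>2 + 4 * b)"
      using sigma_hat_sq_error_sq_le[OF \<theta> \<open>s < d\<close>, of \<sigma> \<xi> t] by (simp add: c_def b_def)
    then show ?thesis
      unfolding W_def G_def by (subst combine) (simp_all add: ennreal_leI)
  qed
  have "(\<integral>\<^sup>+\<xi>. ennreal ((sigma_hat_sq d s (obs \<theta> \<sigma> \<xi>) - \<sigma>\<^sup>2)\<^sup>2) \<partial>noise_law d P)
      \<le> (\<integral>\<^sup>+\<xi>. ennreal c * (2 * W \<xi> + 4 * G \<xi> + 4 * ennreal b) \<partial>noise_law d P)"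
    by (intro nn_integral_mono pointwise)
  also have "\<dots> = ennreal c * (2 * (\<integral>\<^sup>+\<xi>. W \<xi> \<partial>noise_law d P)
      + 4 * (\<integral>\<^sup>+\<xi>. G \<xi> \<partial>noise_law d P) + 4 * ennreal b)"
    using meas by (simp add: nn_integral_add nn_integral_cmult M.emeasure_space_1)
  also have "\<dots> \<le> ennreal c * (2 * ennreal V\<^sub>W + 4 * ennreal V\<^sub>G + 4 * ennreal b)"
    using nn_integral_noise_sum_sq_minus_one[OF P \<open>\<tau> > 0\<close> \<open>a > 4\<close>, of d]
      nn_integral_noise_sum_sq_excess[OF P \<open>\<tau> > 0\<close> \<open>a > 4\<close> \<open>t \<ge> 2\<close>, of d]
    by (intro mult_left_mono add_mono order_refl) (simp_all add: W_def G_def V\<^sub>W_def V\<^sub>G_def)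
  also have "\<dots> = ennreal (c * (2 * V\<^sub>W + 4 * V\<^sub>G + 4 * b))"
    using \<open>V\<^sub>W \<ge> 0\<close> \<open>V\<^sub>G \<ge> 0\<close> by (rule combine)
  finally show ?thesis by (simp add: c_def b_def)
qed

lemma truncation_level:
  fixes a \<rho> :: real
  assumes a: "a > 0" and \<rho>: "0 < \<rho>" "\<rho> \<le> 1"
  defines "t \<equiv> 2 * \<rho> powr (-1 / a)"
  shows "t \<ge> 2"
    "t powr (2 - a) = 2 powr (2 - a) * \<rho> powr (1 - 2 / a)"
    "\<rho> * t powr (4 - a) = 2 powr (4 - a) * (\<rho> powr (1 - 2 / a))\<^sup>2"
    "(\<rho> * t\<^sup>2)\<^sup>2 = 16 * (\<rho> powr (1 - 2 / a))\<^sup>2"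
proof -
  have t_powr: "t powr q = 2 powr q * \<rho> powr (- q / a)" for q
    using \<rho> by (simp add: t_def powr_mult powr_powr)
  have \<rho>_powr: "\<rho> * \<rho> powr q = \<rho> powr (q + 1)" for q
    using \<rho> by (simp add: powr_add)
  have sq: "(\<rho> powr (1 - 2 / a))\<^sup>2 = \<rho> powr (2 - 4 / a)"
    using \<rho> by (simp add: power2_eq_square powr_add[symmetric])
  show "t \<ge> 2"
    using powr_mono2'[of "-1 / a" \<rho> 1] \<rho> a by (simp add: t_def)
  show "t powr (2 - a) = 2 powr (2 - a) * \<rho> powr (1 - 2 / a)"
    using a by (simp add: t_powr diff_divide_distrib)
  show "\<rho> * t powr (4 - a) = 2 powr (4 - a) * (\<rho> powr (1 - 2 / a))\<^sup>2"
    using a by (simp add: t_powr sq mult.left_commute \<rho>_powr diff_divide_distrib)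
  have "t\<^sup>2 = 4 * \<rho> powr (-2 / a)"
    using \<rho> by (simp add: t_def power2_eq_square powr_add[symmetric])
  moreover have "\<rho> * (\<rho> * \<rho> powr (- (4 / a))) = \<rho> powr (2 - 4 / a)"
    using \<rho>_powr[of "- (4 / a)"] \<rho>_powr[of "- (4 / a) + 1"] by (simp add: add.commute)
  ultimately show "(\<rho> * t\<^sup>2)\<^sup>2 = 16 * (\<rho> powr (1 - 2 / a))\<^sup>2"
    using \<rho> by (simp add: sq power2_eq_square powr_add[symmetric] algebra_simps)
qed

lemma risk_rate_le:
  fixes a s d K\<^sub>2 K\<^sub>4 M :: real
  assumes a: "a > 0" and s: "1 \<le> s" "2 * s < d" and "0 \<le> K\<^sub>4" "0 \<le> M"
  defines "t \<equiv> 2 * (s / d) powr (-1 / a)"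
    and "B \<equiv> max (1 / sqrt d) ((s / d) powr (1 - 2 / a))"
  shows "(2 * (d * M) + 4 * (d * (K\<^sub>4 * t powr (4 - a)) + d\<^sup>2 * (K\<^sub>2 * t powr (2 - a))\<^sup>2)
      + 4 * (2 * s * t\<^sup>2)\<^sup>2) / d\<^sup>2
    \<le> (2 * M + 4 * K\<^sub>4 * 2 powr (4 - a) + 4 * K\<^sub>2\<^sup>2 * (2 powr (2 - a))\<^sup>2 + 256) * B\<^sup>2"
proof -
  define \<rho> where "\<rho> = s / d"
  define b where "b = \<rho> powr (1 - 2 / a)"
  have d: "d > 0" using s by linarith
  have \<rho>: "0 < \<rho>" "\<rho> \<le> 1" "1 / d \<le> \<rho>"
    using s d by (auto simp: \<rho>_def field_simps)
  have t_eq: "t = 2 * \<rho> powr (-1 / a)" by (simp add: t_def \<rho>_def)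
  note T = truncation_level[OF a \<rho>(1,2), folded t_eq b_def]
  have "1 / d \<le> B\<^sup>2"
    using d power_mono[of "1 / sqrt d" B 2] by (simp add: B_def power_divide)
  have "b\<^sup>2 \<le> B\<^sup>2"
    by (intro power_mono) (auto simp: B_def b_def \<rho>_def)
  have "t powr (4 - a) / d \<le> \<rho> * t powr (4 - a)"
    using mult_left_mono[OF \<rho>(3), of "t powr (4 - a)"] by (simp add: mult.commute)
  also have "\<dots> \<le> 2 powr (4 - a) * B\<^sup>2"
    using T(3) \<open>b\<^sup>2 \<le> B\<^sup>2\<close> by simp
  finally have term4: "t powr (4 - a) / d \<le> 2 powr (4 - a) * B\<^sup>2" .
  have term2: "(t powr (2 - a))\<^sup>2 \<le> (2 powr (2 - a))\<^sup>2 * B\<^sup>2"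
    using T(2) \<open>b\<^sup>2 \<le> B\<^sup>2\<close> by (simp add: power_mult_distrib)
  have term_s: "(2 * s * t\<^sup>2)\<^sup>2 / d\<^sup>2 \<le> 64 * B\<^sup>2"
  proof -
    have "(2 * s * t\<^sup>2)\<^sup>2 / d\<^sup>2 = 4 * (\<rho> * t\<^sup>2)\<^sup>2"
      using d by (simp add: \<rho>_def power2_eq_square)
    then show ?thesis using T(4) \<open>b\<^sup>2 \<le> B\<^sup>2\<close> by simp
  qed
  have "(2 * (d * M) + 4 * (d * (K\<^sub>4 * t powr (4 - a)) + d\<^sup>2 * (K\<^sub>2 * t powr (2 - a))\<^sup>2)
      + 4 * (2 * s * t\<^sup>2)\<^sup>2) / d\<^sup>2
    = 2 * M * (1 / d) + 4 * K\<^sub>4 * (t powr (4 - a) / d) + 4 * K\<^sub>2\<^sup>2 * (t powr (2 - a))\<^sup>2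
      + 4 * ((2 * s * t\<^sup>2)\<^sup>2 / d\<^sup>2)"
    using d by (simp add: add_divide_distrib power_mult_distrib power2_eq_square)
  also have "\<dots> \<le> 2 * M * B\<^sup>2 + 4 * K\<^sub>4 * (2 powr (4 - a) * B\<^sup>2)
      + 4 * K\<^sub>2\<^sup>2 * ((2 powr (2 - a))\<^sup>2 * B\<^sup>2) + 4 * (64 * B\<^sup>2)"
    using \<open>0 \<le> K\<^sub>4\<close> \<open>0 \<le> M\<close> \<open>1 / d \<le> B\<^sup>2\<close> term4 term2 term_s
    by (intro add_mono mult_left_mono) auto
  finally show ?thesis by (simp add: algebra_simps)
qed

definition risk_const :: "real \<Rightarrow> real \<Rightarrow> real" where
  "risk_const a \<tau> = 2 * (16 + tail_moment_const a \<tau> 4 * 2 powr (4 - a))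
     + 4 * tail_moment_const a \<tau> 4 * 2 powr (4 - a)
     + 4 * (tail_moment_const a \<tau> 2)\<^sup>2 * (2 powr (2 - a))\<^sup>2 + 256"

lemma risk_const_pos: "a > 4 \<Longrightarrow> 0 < risk_const a \<tau>"
  unfolding risk_const_def using tail_moment_const_nonneg[of 4 a \<tau>]
  by (intro add_nonneg_pos add_nonneg_nonneg mult_nonneg_nonneg) auto

lemma sigma_hat_sq_risk_rate_le:
  assumes P: "P \<in> noise_class a \<tau>" and "\<tau> > 0" "a > 4"
    and \<theta>: "\<theta> \<in> sparse_vecs d s" and ds: "1 \<le> s" "real s < real d / 2"
  shows "(\<integral>\<^sup>+ \<xi>. ennreal ((sigma_hat_sq d s (obs \<theta> \<sigma> \<xi>) - \<sigma>\<^sup>2)\<^sup>2) \<partial>noise_law d P)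
    \<le> ennreal (risk_const a \<tau> * \<sigma> ^ 4 * (max (1 / sqrt (real d)) ((real s / real d) powr (1 - 2 / a)))\<^sup>2)"
proof -
  define K\<^sub>2 where "K\<^sub>2 = tail_moment_const a \<tau> 2"
  define K\<^sub>4 where "K\<^sub>4 = tail_moment_const a \<tau> 4"
  define M where "M = 16 + K\<^sub>4 * 2 powr (4 - a)"
  define t where "t = 2 * (real s / real d) powr (-1 / a)"
  define B where "B = max (1 / sqrt (real d)) ((real s / real d) powr (1 - 2 / a))"
  have "0 \<le> K\<^sub>4" "0 \<le> M"
    using tail_moment_const_nonneg[of 4 a \<tau>] \<open>a > 4\<close> by (simp_all add: K\<^sub>4_def M_def)
  have "s < d" and "t \<ge> 2"
    using ds truncation_level(1)[of a "real s / real d"] \<open>a > 4\<close> by (auto simp: t_def)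
  have "(\<integral>\<^sup>+ \<xi>. ennreal ((sigma_hat_sq d s (obs \<theta> \<sigma> \<xi>) - \<sigma>\<^sup>2)\<^sup>2) \<partial>noise_law d P)
    \<le> ennreal (\<sigma>^4 / (real d)\<^sup>2 * (2 * (real d * M) + 4 * (real d * (K\<^sub>4 * t powr (4 - a))
        + (real d)\<^sup>2 * (K\<^sub>2 * t powr (2 - a))\<^sup>2) + 4 * (2 * real s * t\<^sup>2)\<^sup>2))"
    (is "_ \<le> ennreal (\<sigma>^4 / (real d)\<^sup>2 * ?X)")
    using sigma_hat_sq_risk_le[OF P \<open>\<tau> > 0\<close> \<open>a > 4\<close> \<theta> \<open>s < d\<close> \<open>t \<ge> 2\<close>]
    by (simp add: K\<^sub>2_def K\<^sub>4_def M_def)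
  also have "\<dots> \<le> ennreal (risk_const a \<tau> * \<sigma> ^ 4 * B\<^sup>2)"
  proof (intro ennreal_leI)
    have "?X / (real d)\<^sup>2 \<le> risk_const a \<tau> * B\<^sup>2"
      using risk_rate_le[of a "real s" "real d" K\<^sub>4 M K\<^sub>2, folded t_def B_def] ds \<open>a > 4\<close>
        \<open>0 \<le> K\<^sub>4\<close> \<open>0 \<le> M\<close>
      by (simp add: risk_const_def K\<^sub>2_def K\<^sub>4_def M_def)
    from mult_left_mono[OF this, of "\<sigma>^4"]
    show "\<sigma>^4 / (real d)\<^sup>2 * ?X \<le> risk_const a \<tau> * \<sigma> ^ 4 * B\<^sup>2"
      by (simp add: mult_ac)
  qed
  finally show ?thesis by (simp add: B_def)
qed

theorem theorem4:
  fixes a \<tau> :: real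
  assumes "\<tau> > 0" and "a > 4"
  shows "\<exists>C>0. \<forall>d s::nat. 1 \<le> s \<and> real s < real d / 2 \<longrightarrow>
    (\<forall>P\<in>noise_class a \<tau>. \<forall>\<sigma>>0. \<forall>\<theta>\<in>sparse_vecs d s.
      (\<integral>\<^sup>+ \<xi>. ennreal ((sigma_hat_sq d s (obs \<theta> \<sigma> \<xi>) - \<sigma>\<^sup>2)\<^sup>2) \<partial>noise_law d P)
        \<le> ennreal (C * \<sigma> ^ 4 * (max (1 / sqrt (real d)) ((real s / real d) powr (1 - 2 / a)))\<^sup>2))"
  using sigma_hat_sq_risk_rate_le[OF _ assms] risk_const_pos[OF \<open>a > 4\<close>]
  by blast

end
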